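(* In the two-block Spice setting, fix $t>0$ and run iterations $k=0,\dots,t$ with a constant scaling factor $\rho=\rho(t)>0$, where for every $k=1,\dots,t$ $$\eta_k\ \ge\ \max\Big\{\eta_{k-1}\sqrt{\tfrac{\mathsf{R}(u^k)}{\mathsf{R}(u^{k-1})}},\ \ \eta_{k-1}\,\tfrac{\mathsf{R}(\bar u^k)\sqrt{\mathsf{R}(u^{k-1})}}{\mathsf{R}(\bar u^{k-1})\sqrt{\mathsf{R}(u^k)}}\Big\}.$$ Define $\bar u_t=\frac{1}{t+1}\sum_{k=0}^t\bar u^k$, $\eta_t^{\mathrm{avg}}=\frac{t+1}{\sum_{k=0}^t1/\eta_k}$, $\bar w_t=\frac{\sum_{k=0}^t\bar w^k/\eta_k}{\sum_{k=0}^t1/\eta_k}$. Then $\bar w_t\in\Omega$ and for every $w^*=(x^*,y^*,\lambda^* )\in\Omega$ with $u^*=(x^*,y^* )$, $$\vartheta(\bar u_t)-\vartheta(u^* )+(\bar w_t-w^* )^\top\frac{1}{\eta_t^{\mathrm{avg}}\rho(t)}\Gamma(w^* )\ \le\ \frac{1}{2\eta_0\rho(t)(t+1)}\|w^*-w^0\|^2_{\mathsf{H}_0},$$ where $\mathsf{H}_0=\mathrm{diag}\big(\sqrt{\mathsf{R}(u^0)}I_n,\ \sqrt{\mathsf{R}(u^0)}I_m,\ \frac{\mu\mathsf{R}(\bar u^0)}{\sqrt{\mathsf{R}(u^0)}}I_p\big)$. In particular, for $\rho(t)=(t+1)^\alpha$ ($\alpha>0$), $\rho(t)=e^{\beta t}$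 ($\beta>0$), $\rho(t)=(t+1)^t$ the right-hand side equals $\frac{\|w^*-w^0\|^2_{\mathsf{H}_0}}{2\eta_0}$ divided by $(t+1)^{1+\alpha}$, $e^{\beta t}(t+1)$, $(t+1)^{t+1}$ respectively.
   Context: Two-block Spice setting. Let $\mathcal{X}\subseteq\mathbb{R}^n$, $\mathcal{Y}\subseteq\mathbb{R}^m$ be nonempty closed convex sets; $f:\mathbb{R}^n\to\mathbb{R}$, $g:\mathbb{R}^m\to\mathbb{R}$ convex; $\phi_1,\dots,\phi_p:\mathbb{R}^n\to\mathbb{R}$ and $\psi_1,\dots,\psi_p:\mathbb{R}^m\to\mathbb{R}$ convex and continuously differentiable; $\Phi=(\phi_1,\dots,\phi_p)^\top$, $\Psi=(\psi_1,\dots,\psi_p)^\top$ with Jacobians $\mathcal{D}\Phi(x)\in\mathbb{R}^{p\times n}$, $\mathcal{D}\Psi(y)\in\mathbb{R}^{p\times m}$. Let $\mathcal{Z}=\mathbb{R}^p_+$, $\Omega=\mathcal{X}\times\mathcal{Y}\times\mathcal{Z}$, $u=(x,y)$, $w=(x,y,\lambda)$, $\vartheta(u)=f(x)+g(y)$, $\Gamma(w)=(\mathcal{D}\Phi(x)^\top\lambda,\ \mathcal{D}\Psi(y)^\top\lambda,\ -\Phi(x)-\Psi(y))$. For symmetric $A$, $\|v\|_A^2:=v^\top Av$; matrix norms are spectral norms; $\mathsf{R}(u):=\|\mathcal{D}\Phi(x)\|^2+\|\mathcal{D}\Psi(y)\|^2$. Fix $\rho>0$, $\mu>1$, $w^0=(x^0,y^0,\lambda^0)\in\Omega$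 and positive $\eta_0,\eta_1,\dots$. Given $w^k=(x^k,y^k,\lambda^k)$, iteration $k$ is: $r_k=\frac{1}{\eta_k}\sqrt{\mathsf{R}(u^k)}$; $\bar x^k=\arg\min_{x\in\mathcal{X}}\{\rho f(x)+\frac{1}{\eta_k}(\lambda^k)^\top\Phi(x)+\frac{r_k}{2}\|x-x^k\|^2\}$; $\bar y^k=\arg\min_{y\in\mathcal{Y}}\{\rho g(y)+\frac{1}{\eta_k}(\lambda^k)^\top\Psi(y)+\frac{r_k}{2}\|y-y^k\|^2\}$; $\bar u^k=(\bar x^k,\bar y^k)$; $s_k=\frac{\mu\mathsf{R}(\bar u^k)}{\eta_k\sqrt{\mathsf{R}(u^k)}}$; $\bar\lambda^k=\arg\max_{\lambda\in\mathcal{Z}}\{\frac{1}{\eta_k}\lambda^\top[\Phi(\bar x^k)+\Psi(\bar y^k)]-\frac{s_k}{2}\|\lambda-\lambda^k\|^2\}=\max\{\lambda^k+\frac{1}{\eta_ks_k}(\Phi(\bar x^k)+\Psi(\bar y^k)),0\}$; $\bar w^k=(\bar x^k,\bar y^k,\bar\lambda^k)$; $w^{k+1}=w^k-M_k(w^k-\bar w^k)$ with $M_k=\begin{pmatrix}I_n&0&-\frac{1}{\eta_kr_k}\mathcal{D}\Phi(\bar x^k)^\top\\0&I_m&-\frac{1}{\eta_kr_k}\mathcal{D}\Psi(\bar y^k)^\top\\0&0&I_p\end{pmatrix}$. It is assumed that $\mathsf{R}(u^k)>0$, $\mathsf{R}(\bar u^k)>0$ for all $k$. Define $Q_k=\begin{pmatrix}r_kI_n&0&-\frac{1}{\eta_k}\mathcal{D}\Phi(\bar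 x^k)^\top\\0&r_kI_m&-\frac{1}{\eta_k}\mathcal{D}\Psi(\bar y^k)^\top\\0&0&s_kI_p\end{pmatrix}$, $H_k=\mathrm{diag}(r_kI_n,r_kI_m,s_kI_p)$, $G_k=\mathrm{diag}\big(r_kI_n,\ r_kI_m,\ s_kI_p-\frac{1}{\eta_k^2r_k}[\mathcal{D}\Phi(\bar x^k)\mathcal{D}\Phi(\bar x^k)^\top+\mathcal{D}\Psi(\bar y^k)\mathcal{D}\Psi(\bar y^k)^\top]\big)$. *)

theory Defs
  imports "HOL-Analysis.Analysis"
begin

definition spec_norm :: "real^'n^'p \<Rightarrow> real" where
  "spec_norm A = onorm (\<lambda>v. A *v v)"

definition Rfun :: "(real^'n \<Rightarrow> real^'n^'p) \<Rightarrow> (real^'m \<Rightarrow> real^'m^'p)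
    \<Rightarrow> real^'n \<Rightarrow> real^'m \<Rightarrow> real" where
  "Rfun DPhi DPsi x y = (spec_norm (DPhi x))\<^sup>2 + (spec_norm (DPsi y))\<^sup>2"

end

theory Submission
  imports Defs
begin

(* Write w_s = (x_s, y_s, l_s) for the comparison point and u_s = (x_s, y_s).
   Each iteration satisfies the descent inequality
     rho (theta(ubar^k) - theta(u_s)) + (1/eta_k) (wbar^k - w_s)' Gamma(w_s)
       <= 1/2 (||w_s - w^k||^2_{H_k} - ||w_s - w^{k+1}||^2_{H_k}).
   It combines the first-order optimality conditions of the two linearized proximal
   subproblems, the tangent inequalities of the convex constraint maps and the variational
   inequality of the projection onto the nonnegative orthant. The correction step M_k is
   designed so that the cross terms between primal and dual increments cancel, and
   s_k >= R(ubar^k) / (eta_k^2 r_k) absorbs the remaining primal increment.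
   The step-size condition makes r_k and s_k nonincreasing, so the right-hand sides
   telescope; Jensen's inequality for theta and the affinity of w |-> (w - w_s)' Gamma(w_s)
   turn the sum into the ergodic bound. *)

lemma has_derivative_difference_quotient_at_right:
  fixes q :: "'a::real_normed_vector \<Rightarrow> real"
  assumes "(q has_derivative q') (at x)"
  shows "((\<lambda>t. (q (x + t *\<^sub>R v) - q x) / t) \<longlongrightarrow> q' v) (at_right 0)"
proof -
  have "((\<lambda>t::real. x + t *\<^sub>R v) has_derivative (\<lambda>t. t *\<^sub>R v)) (at 0)"
    by (auto intro!: derivative_eq_intros)
  from has_derivative_compose[OF this] assms
  have "((\<lambda>t. q (x + t *\<^sub>R v)) has_derivative (\<lambda>t. q' (t *\<^sub>R v))) (at 0)"
    by (simp add: o_def)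
  moreover have "(\<lambda>t. q' (t *\<^sub>R v)) = (\<lambda>t. q' v * t)"
    using linear_scale[OF has_derivative_linear[OF assms]] by (auto simp: mult.commute)
  ultimately have "((\<lambda>t. q (x + t *\<^sub>R v)) has_field_derivative q' v) (at 0)"
    by (simp add: has_field_derivative_def)
  then have "((\<lambda>t. (q (x + t *\<^sub>R v) - q x) / t) \<longlongrightarrow> q' v) (at 0)"
    unfolding DERIV_def by simp
  then show ?thesis
    using tendsto_mono at_within_le_at by blast
qed

lemma convex_on_has_derivative_above_tangent:
  fixes q :: "'a::real_normed_vector \<Rightarrow> real"
  assumes "convex_on UNIV q" "(q has_derivative q') (at x)"
  shows "q x + q' (z - x) \<le> q z"
proof -
  have "eventually (\<lambda>t. (q (x + t *\<^sub>R (z - x)) - q x) / t \<le> q z - q x) (at_right (0::real))"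
    using eventually_at_right_real[OF zero_less_one]
  proof (rule eventually_mono)
    fix t :: real
    assume t: "t \<in> {0<..<1}"
    have "q ((1 - t) *\<^sub>R x + t *\<^sub>R z) \<le> (1 - t) * q x + t * q z"
      using assms(1) t by (intro convex_onD) auto
    moreover have "(1 - t) *\<^sub>R x + t *\<^sub>R z = x + t *\<^sub>R (z - x)"
      by (simp add: algebra_simps)
    ultimately have "q (x + t *\<^sub>R (z - x)) - q x \<le> t * (q z - q x)"
      by (simp add: algebra_simps)
    then show "(q (x + t *\<^sub>R (z - x)) - q x) / t \<le> q z - q x"
      using t by (simp add: divide_le_eq mult.commute)
  qed
  from tendsto_upperbound[OF has_derivative_difference_quotient_at_right[OF assms(2)] this]
  show ?thesis by simp
qed

lemma convex_minimizer_variational_ineq: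
  fixes a q :: "'a::real_normed_vector \<Rightarrow> real"
  assumes "convex X" "xh \<in> X" "z \<in> X" "convex_on UNIV a" "(q has_derivative q') (at xh)"
    and min: "\<forall>z\<in>X. a xh + q xh \<le> a z + q z"
  shows "a xh - a z \<le> q' (z - xh)"
proof -
  have "eventually (\<lambda>t. a xh - a z \<le> (q (xh + t *\<^sub>R (z - xh)) - q xh) / t) (at_right (0::real))"
    using eventually_at_right_real[OF zero_less_one]
  proof (rule eventually_mono)
    fix t :: real
    assume t: "t \<in> {0<..<1}"
    have seg: "(1 - t) *\<^sub>R xh + t *\<^sub>R z = xh + t *\<^sub>R (z - xh)"
      by (simp add: algebra_simps)
    then have "xh + t *\<^sub>R (z - xh) \<in> X"
      using convexD[OF assms(1-3), of "1 - t" t] t by auto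
    with min have "a xh + q xh \<le> a (xh + t *\<^sub>R (z - xh)) + q (xh + t *\<^sub>R (z - xh))"
      by blast
    moreover have "a (xh + t *\<^sub>R (z - xh)) \<le> (1 - t) * a xh + t * a z"
      using assms(4) t seg[symmetric] by (auto intro: convex_onD)
    ultimately show "a xh - a z \<le> (q (xh + t *\<^sub>R (z - xh)) - q xh) / t"
      using t by (simp add: le_divide_eq algebra_simps)
  qed
  from tendsto_lowerbound[OF has_derivative_difference_quotient_at_right[OF assms(5)] this]
  show ?thesis by simp
qed

lemma convex_components_inner_above_tangent:
  fixes Phi :: "real^'n \<Rightarrow> real^'p" and DPhi :: "real^'n \<Rightarrow> real^'n^'p"
  assumes cvx: "\<forall>i. convex_on UNIV (\<lambda>z. Phi z $ i)"
    and der: "\<forall>z. (Phi has_derivative (\<lambda>h. DPhi z *v h)) (at z)"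
    and w: "\<forall>i. w $ i \<ge> 0"
  shows "w \<bullet> (DPhi x *v (z - x)) \<le> w \<bullet> Phi z - w \<bullet> Phi x"
proof -
  have "w $ i * (DPhi x *v (z - x)) $ i \<le> w $ i * Phi z $ i - w $ i * Phi x $ i" for i
  proof -
    have "((\<lambda>z. Phi z $ i) has_derivative (\<lambda>h. (DPhi x *v h) $ i)) (at x)"
      using bounded_linear.has_derivative[OF bounded_linear_vec_nth der[rule_format, of x]] .
    from convex_on_has_derivative_above_tangent[OF cvx[rule_format, of i] this, where z = z]
    have "(DPhi x *v (z - x)) $ i \<le> Phi z $ i - Phi x $ i" by simp
    from mult_left_mono[OF this, of "w $ i"] w show ?thesis
      by (simp add: right_diff_distrib)
  qed
  then have "(\<Sum>i\<in>UNIV. w $ i * (DPhi x *v (z - x)) $ i)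
      \<le> (\<Sum>i\<in>UNIV. w $ i * Phi z $ i - w $ i * Phi x $ i)"
    by (rule sum_mono)
  then show ?thesis by (simp add: inner_vec_def sum_subtractf)
qed

lemma norm_transpose_mult_le:
  fixes A :: "real^'n^'p" and d :: "real^'p"
  shows "norm (transpose A *v d) \<le> spec_norm A * norm d"
proof -
  define v where "v = transpose A *v d"
  have "(norm v)\<^sup>2 = d \<bullet> (A *v v)"
    by (simp add: v_def power2_norm_eq_inner dot_lmul_matrix)
  also have "\<dots> \<le> norm d * norm (A *v v)"
    by (rule norm_cauchy_schwarz)
  also have "\<dots> \<le> norm d * (spec_norm A * norm v)"
    unfolding spec_norm_def by (intro mult_left_mono onorm) auto
  finally have "norm v * norm v \<le> (spec_norm A * norm d) * norm v"
    by (simp add: power2_eq_square algebra_simps)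
  moreover have "0 \<le> spec_norm A"
    unfolding spec_norm_def by (intro onorm_pos_le) auto
  ultimately show ?thesis
    unfolding v_def[symmetric] by (cases "norm v = 0") auto
qed

lemma inner_transpose_mult_vec: "(u :: real^'n) \<bullet> (transpose A *v d) = d \<bullet> (A *v u)"
  by (subst inner_commute) (simp add: dot_lmul_matrix)

lemma nonneg_projection_three_point:
  fixes lam lh c l :: "real^'p"
  assumes eta: "eta > 0" and s: "s > 0"
    and lh: "lh = (\<chi> i. max (lam $ i + (1 / (eta * s)) * c $ i) 0)"
    and l: "\<forall>i. l $ i \<ge> 0"
  shows "(1 / eta) * (c \<bullet> (l - lh))
    \<le> s / 2 * ((norm (l - lam))\<^sup>2 - (norm (l - lh))\<^sup>2 - (norm (lh - lam))\<^sup>2)"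
proof -
  have "(1 / eta) * (c $ i * (l $ i - lh $ i)) \<le> s * ((lh $ i - lam $ i) * (l $ i - lh $ i))" for i
  proof (cases "lam $ i + (1 / (eta * s)) * c $ i \<ge> 0")
    case True
    then have "s * (lh $ i - lam $ i) = (1 / eta) * c $ i"
      using lh eta s by (simp add: field_simps)
    then show ?thesis
      by (metis mult.assoc order_refl)
  next
    case False
    then have "lh $ i = 0" "s * lam $ i + (1 / eta) * c $ i < 0"
      using lh eta s by (auto simp: field_simps)
    moreover have "(s * lam $ i + (1 / eta) * c $ i) * l $ i \<le> 0"
      using calculation(2) l by (intro mult_nonpos_nonneg) auto
    ultimately show ?thesis
      by (simp add: algebra_simps)
  qed
  then have "(1 / eta) * (c \<bullet> (l - lh)) \<le> s * ((lh - lam) \<bullet> (l - lh))"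
    by (simp add: inner_vec_def sum_distrib_left sum_mono)
  also have "(lh - lam) \<bullet> (l - lh) = ((norm (l - lam))\<^sup>2 - (norm (l - lh))\<^sup>2 - (norm (lh - lam))\<^sup>2) / 2"
    using dot_norm[of "lh - lam" "l - lh"] by (simp add: algebra_simps)
  finally show ?thesis by simp
qed

text \<open>The correction \<open>x' - xh\<close> absorbs the part \<open>lam - lh\<close> of the linearized constraint
  term, so only the tangent inequality at the new multiplier \<open>lh\<close> is needed.\<close>
lemma linearized_prox_step:
  fixes X :: "(real^'n) set" and f :: "real^'n \<Rightarrow> real"
    and Phi :: "real^'n \<Rightarrow> real^'p" and DPhi :: "real^'n \<Rightarrow> real^'n^'p"
    and x xh x' z :: "real^'n" and lam lh :: "real^'p"
  assumes "convex X" and f_cvx: "convex_on UNIV f"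
    and Phi_cvx: "\<forall>i. convex_on UNIV (\<lambda>z. Phi z $ i)"
    and Phi_deriv: "\<forall>z. (Phi has_derivative (\<lambda>h. DPhi z *v h)) (at z)"
    and rho: "\<rho> > 0" and eta: "eta > 0" and r: "r > 0"
    and z: "z \<in> X" and lh: "\<forall>i. lh $ i \<ge> 0"
    and xstep: "xh \<in> X \<and> (\<forall>z\<in>X.
        \<rho> * f xh + (1 / eta) * (lam \<bullet> Phi xh) + r / 2 * (norm (xh - x))\<^sup>2
        \<le> \<rho> * f z + (1 / eta) * (lam \<bullet> Phi z) + r / 2 * (norm (z - x))\<^sup>2)"
    and x': "x' = xh + (1 / (eta * r)) *\<^sub>R (transpose (DPhi xh) *v (lam - lh))"
  shows "\<rho> * (f xh - f z) + (1 / eta) * (lh \<bullet> (Phi xh - Phi z))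
    \<le> r / 2 * ((norm (z - x))\<^sup>2 - (norm (z - x'))\<^sup>2 + (norm (x' - xh))\<^sup>2)"
proof -
  define E where "E = 1 / eta"
  have E: "E > 0" using eta by (simp add: E_def)
  have "((\<lambda>z. E * (lam \<bullet> Phi z) + r / 2 * ((z - x) \<bullet> (z - x))) has_derivative
      (\<lambda>h. E * (lam \<bullet> (DPhi xh *v h)) + r / 2 * (h \<bullet> (xh - x) + (xh - x) \<bullet> h))) (at xh)"
    using Phi_deriv by (auto intro!: derivative_eq_intros)
  moreover have "convex_on UNIV (\<lambda>z. \<rho> * f z)"
    using rho f_cvx by (intro convex_on_cmul) auto
  moreover have "\<forall>z\<in>X. \<rho> * f xh + (E * (lam \<bullet> Phi xh) + r / 2 * ((xh - x) \<bullet> (xh - x)))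
      \<le> \<rho> * f z + (E * (lam \<bullet> Phi z) + r / 2 * ((z - x) \<bullet> (z - x)))"
    using xstep unfolding E_def power2_norm_eq_inner by (simp add: add.assoc)
  ultimately have "\<rho> * f xh - \<rho> * f z
      \<le> E * (lam \<bullet> (DPhi xh *v (z - xh))) + r / 2 * ((z - xh) \<bullet> (xh - x) + (xh - x) \<bullet> (z - xh))"
    using convex_minimizer_variational_ineq[OF \<open>convex X\<close> _ z] xstep by blast
  then have opt: "\<rho> * f xh - \<rho> * f z \<le> E * (lam \<bullet> (DPhi xh *v (z - xh))) + r * ((z - xh) \<bullet> (xh - x))"
    by (simp add: inner_commute)
  have tangent: "E * (lh \<bullet> (DPhi xh *v (z - xh))) \<le> E * (lh \<bullet> Phi z - lh \<bullet> Phi xh)"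
    using convex_components_inner_above_tangent[OF Phi_cvx Phi_deriv lh] E
    by (intro mult_left_mono) auto
  have "r * ((z - xh) \<bullet> (x' - xh)) = E * ((lam - lh) \<bullet> (DPhi xh *v (z - xh)))"
    using eta r inner_transpose_mult_vec[of "z - xh" "DPhi xh" "lam - lh"]
    unfolding x' E_def by simp
  then have split: "E * (lam \<bullet> (DPhi xh *v (z - xh)))
      = E * (lh \<bullet> (DPhi xh *v (z - xh))) + r * ((z - xh) \<bullet> (x' - xh))"
    by (simp add: inner_diff_left algebra_simps)
  have "\<rho> * (f xh - f z) + E * (lh \<bullet> (Phi xh - Phi z))
      \<le> r * ((z - xh) \<bullet> (x' - xh)) + r * ((z - xh) \<bullet> (xh - x))"
    using opt tangent split by (simp add: inner_diff_right algebra_simps)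
  also have "\<dots> = r * ((z - xh) \<bullet> (x' - xh) + (z - xh) \<bullet> (xh - x))"
    by (simp add: distrib_left)
  also have "\<dots> = r / 2 * ((norm (z - x))\<^sup>2 - (norm (z - x'))\<^sup>2 + (norm (x' - xh))\<^sup>2)
      - r / 2 * (norm (xh - x))\<^sup>2"
  proof -
    have e: "(z - xh) - (x' - xh) = z - x'" "(z - xh) + (xh - x) = z - x" by simp_all
    have pol: "(z - xh) \<bullet> (x' - xh) + (z - xh) \<bullet> (xh - x)
      = ((norm (z - x))\<^sup>2 - (norm (z - x'))\<^sup>2 + (norm (x' - xh))\<^sup>2 - (norm (xh - x))\<^sup>2) / 2"
      using dot_norm_neg[of "z - xh" "x' - xh", unfolded e(1)]
        dot_norm[of "z - xh" "xh - x", unfolded e(2)] by argo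
    show ?thesis unfolding pol by (simp add: field_simps)
  qed
  also have "\<dots> \<le> r / 2 * ((norm (z - x))\<^sup>2 - (norm (z - x'))\<^sup>2 + (norm (x' - xh))\<^sup>2)"
    using r by simp
  finally show ?thesis unfolding E_def .
qed

lemma scaled_transpose_sq_le:
  fixes A :: "real^'n^'p" and B :: "real^'m^'p" and d :: "real^'p"
  assumes eta: "eta > 0" and r: "r > 0"
    and G: "(spec_norm A)\<^sup>2 + (spec_norm B)\<^sup>2 \<le> s * (eta * eta * r)"
  shows "r * ((norm ((1 / (eta * r)) *\<^sub>R (transpose A *v d)))\<^sup>2
            + (norm ((1 / (eta * r)) *\<^sub>R (transpose B *v d)))\<^sup>2) \<le> s * (norm d)\<^sup>2"
proof -
  have "(norm (transpose A *v d))\<^sup>2 + (norm (transpose B *v d))\<^sup>2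
      \<le> (spec_norm A * norm d)\<^sup>2 + (spec_norm B * norm d)\<^sup>2"
    by (intro add_mono power_mono norm_transpose_mult_le) auto
  also have "\<dots> \<le> s * (eta * eta * r) * (norm d)\<^sup>2"
    using mult_right_mono[OF G, of "(norm d)\<^sup>2"] by (simp add: power_mult_distrib algebra_simps)
  finally have "((norm (transpose A *v d))\<^sup>2 + (norm (transpose B *v d))\<^sup>2) / (eta * eta * r)
      \<le> s * (norm d)\<^sup>2"
    using eta r by (simp add: pos_divide_le_eq mult_ac)
  moreover have "r * ((norm ((1 / (eta * r)) *\<^sub>R (transpose A *v d)))\<^sup>2
            + (norm ((1 / (eta * r)) *\<^sub>R (transpose B *v d)))\<^sup>2)
      = ((norm (transpose A *v d))\<^sup>2 + (norm (transpose B *v d))\<^sup>2) / (eta * eta * r)"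
    using eta r by (simp add: power2_eq_square field_simps)
  ultimately show ?thesis by simp
qed

lemma inner_transpose_above_tangent:
  fixes Phi :: "real^'n \<Rightarrow> real^'p" and DPhi :: "real^'n \<Rightarrow> real^'n^'p"
  assumes "\<forall>i. convex_on UNIV (\<lambda>z. Phi z $ i)"
    and "\<forall>z. (Phi has_derivative (\<lambda>h. DPhi z *v h)) (at z)"
    and "\<forall>i. l $ i \<ge> 0"
  shows "(x - z) \<bullet> (transpose (DPhi z) *v l) \<le> l \<bullet> Phi x - l \<bullet> Phi z"
  unfolding inner_transpose_mult_vec using convex_components_inner_above_tangent[OF assms] .

lemma spice_iteration_descent:
  fixes X :: "(real^'n) set" and Y :: "(real^'m) set"
    and f :: "real^'n \<Rightarrow> real" and g :: "real^'m \<Rightarrow> real"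
    and Phi :: "real^'n \<Rightarrow> real^'p" and Psi :: "real^'m \<Rightarrow> real^'p"
    and DPhi :: "real^'n \<Rightarrow> real^'n^'p" and DPsi :: "real^'m \<Rightarrow> real^'m^'p"
    and x xh x' xs :: "real^'n" and y yh y' ys :: "real^'m" and lam lh ls :: "real^'p"
  assumes cX: "convex X" and cY: "convex Y"
    and f_cvx: "convex_on UNIV f" and g_cvx: "convex_on UNIV g"
    and Phi_cvx: "\<forall>i. convex_on UNIV (\<lambda>z. Phi z $ i)"
    and Psi_cvx: "\<forall>i. convex_on UNIV (\<lambda>z. Psi z $ i)"
    and Phi_deriv: "\<forall>z. (Phi has_derivative (\<lambda>h. DPhi z *v h)) (at z)"
    and Psi_deriv: "\<forall>z. (Psi has_derivative (\<lambda>h. DPsi z *v h)) (at z)"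
    and rho: "\<rho> > 0" and eta: "eta > 0" and r: "r > 0" and s: "s > 0"
    and xs: "xs \<in> X" and ys: "ys \<in> Y" and ls: "\<forall>i. ls $ i \<ge> 0"
    and xstep: "xh \<in> X \<and> (\<forall>z\<in>X.
        \<rho> * f xh + (1 / eta) * (lam \<bullet> Phi xh) + r / 2 * (norm (xh - x))\<^sup>2
        \<le> \<rho> * f z + (1 / eta) * (lam \<bullet> Phi z) + r / 2 * (norm (z - x))\<^sup>2)"
    and ystep: "yh \<in> Y \<and> (\<forall>z\<in>Y.
        \<rho> * g yh + (1 / eta) * (lam \<bullet> Psi yh) + r / 2 * (norm (yh - y))\<^sup>2
        \<le> \<rho> * g z + (1 / eta) * (lam \<bullet> Psi z) + r / 2 * (norm (z - y))\<^sup>2)"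
    and lh: "lh = (\<chi> i. max (lam $ i + (1 / (eta * s)) * (Phi xh $ i + Psi yh $ i)) 0)"
    and x': "x' = xh + (1 / (eta * r)) *\<^sub>R (transpose (DPhi xh) *v (lam - lh))"
    and y': "y' = yh + (1 / (eta * r)) *\<^sub>R (transpose (DPsi yh) *v (lam - lh))"
    and G: "(spec_norm (DPhi xh))\<^sup>2 + (spec_norm (DPsi yh))\<^sup>2 \<le> s * (eta * eta * r)"
  shows "\<rho> * ((f xh + g yh) - (f xs + g ys))
         + (1 / eta) * ((xh - xs) \<bullet> (transpose (DPhi xs) *v ls)
                     + (yh - ys) \<bullet> (transpose (DPsi ys) *v ls)
                     + (lh - ls) \<bullet> (- Phi xs - Psi ys))
       \<le> 1/2 * ((r * ((norm (xs - x))\<^sup>2 + (norm (ys - y))\<^sup>2) + s * (norm (ls - lam))\<^sup>2)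
               - (r * ((norm (xs - x'))\<^sup>2 + (norm (ys - y'))\<^sup>2) + s * (norm (ls - lh))\<^sup>2))"
proof -
  have lh_nonneg: "\<forall>i. lh $ i \<ge> 0" using lh by simp
  have primal_x: "\<rho> * (f xh - f xs) + (1 / eta) * (lh \<bullet> (Phi xh - Phi xs))
      \<le> r / 2 * ((norm (xs - x))\<^sup>2 - (norm (xs - x'))\<^sup>2 + (norm (x' - xh))\<^sup>2)"
    by (rule linearized_prox_step[OF cX f_cvx Phi_cvx Phi_deriv rho eta r xs lh_nonneg xstep x'])
  have primal_y: "\<rho> * (g yh - g ys) + (1 / eta) * (lh \<bullet> (Psi yh - Psi ys))
      \<le> r / 2 * ((norm (ys - y))\<^sup>2 - (norm (ys - y'))\<^sup>2 + (norm (y' - yh))\<^sup>2)"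
    by (rule linearized_prox_step[OF cY g_cvx Psi_cvx Psi_deriv rho eta r ys lh_nonneg ystep y'])
  have dual: "(1 / eta) * ((Phi xh + Psi yh) \<bullet> (ls - lh))
      \<le> s / 2 * ((norm (ls - lam))\<^sup>2 - (norm (ls - lh))\<^sup>2 - (norm (lh - lam))\<^sup>2)"
    using nonneg_projection_three_point[OF eta s _ ls, of lh lam "Phi xh + Psi yh"] lh by simp
  have coupling: "r * ((norm (x' - xh))\<^sup>2 + (norm (y' - yh))\<^sup>2) \<le> s * (norm (lh - lam))\<^sup>2"
    using scaled_transpose_sq_le[OF eta r G, of "lam - lh"] unfolding x' y'
    by (simp add: norm_minus_commute)
  have "(xh - xs) \<bullet> (transpose (DPhi xs) *v ls) + (yh - ys) \<bullet> (transpose (DPsi ys) *v ls)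
        + (lh - ls) \<bullet> (- Phi xs - Psi ys)
      \<le> (Phi xh + Psi yh) \<bullet> (ls - lh) + lh \<bullet> (Phi xh - Phi xs) + lh \<bullet> (Psi yh - Psi ys)"
    using inner_transpose_above_tangent[OF Phi_cvx Phi_deriv ls, of xh xs]
      inner_transpose_above_tangent[OF Psi_cvx Psi_deriv ls, of yh ys]
    by (simp add: inner_diff_left inner_diff_right inner_add_left inner_commute algebra_simps)
  from mult_left_mono[OF this, of "1 / eta"] eta
  have "(1 / eta) * ((xh - xs) \<bullet> (transpose (DPhi xs) *v ls) + (yh - ys) \<bullet> (transpose (DPsi ys) *v ls)
        + (lh - ls) \<bullet> (- Phi xs - Psi ys))
      \<le> (1 / eta) * ((Phi xh + Psi yh) \<bullet> (ls - lh)) + (1 / eta) * (lh \<bullet> (Phi xh - Phi xs))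
        + (1 / eta) * (lh \<bullet> (Psi yh - Psi ys))"
    by (simp add: distrib_left)
  with primal_x primal_y dual coupling show ?thesis
    by (simp add: algebra_simps)
qed

lemma sum_le_of_telescoping_nonincreasing:
  fixes L :: "nat \<Rightarrow> real" and V :: "nat \<Rightarrow> nat \<Rightarrow> real"
  assumes step: "\<And>k. k \<le> t \<Longrightarrow> L k \<le> V k k - V k (Suc k)"
    and mono: "\<And>k. k < t \<Longrightarrow> V (Suc k) (Suc k) \<le> V k (Suc k)"
    and "0 \<le> V t (Suc t)"
  shows "(\<Sum>k\<le>t. L k) \<le> V 0 0"
proof -
  have "(\<Sum>k\<le>j. L k) \<le> V 0 0 - V j (Suc j)" if "j \<le> t" for j
    using that
  proof (induction j)
    case 0
    then show ?case using step[of 0] by simp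
  next
    case (Suc j)
    then have "(\<Sum>k\<le>j. L k) \<le> V 0 0 - V j (Suc j)" by simp
    with step[OF Suc.prems] mono[of j] Suc.prems show ?case by simp
  qed
  from this[of t] \<open>0 \<le> V t (Suc t)\<close> show ?thesis by simp
qed

lemma convex_weighted_average_mem:
  fixes v :: "'i \<Rightarrow> 'a::real_vector"
  assumes "finite K" "convex C" "\<forall>k\<in>K. 0 \<le> a k" "0 < (\<Sum>k\<in>K. a k)" "\<forall>k\<in>K. v k \<in> C"
  shows "(1 / (\<Sum>k\<in>K. a k)) *\<^sub>R (\<Sum>k\<in>K. a k *\<^sub>R v k) \<in> C"
proof -
  have "(\<Sum>k\<in>K. (a k / (\<Sum>k\<in>K. a k)) *\<^sub>R v k) \<in> C"
    using assms by (intro convex_sum) (auto simp: sum_divide_distrib[symmetric])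
  then show ?thesis by (simp add: scaleR_sum_right)
qed

lemma sum_mult_inner_diff_weighted_average:
  fixes v :: "'i \<Rightarrow> 'a::real_inner"
  assumes "(\<Sum>k\<in>K. a k) \<noteq> 0"
  shows "(\<Sum>k\<in>K. a k * ((v k - z) \<bullet> P))
    = (\<Sum>k\<in>K. a k) * (((1 / (\<Sum>k\<in>K. a k)) *\<^sub>R (\<Sum>k\<in>K. a k *\<^sub>R v k) - z) \<bullet> P)"
  using assms
  by (simp add: inner_diff_left inner_sum_left sum_subtractf right_diff_distrib flip: sum_distrib_right)

lemma convex_on_uniform_average_le:
  fixes f :: "'a::real_vector \<Rightarrow> real"
  assumes "convex_on UNIV f"
  shows "f ((1 / (real t + 1)) *\<^sub>R (\<Sum>k\<le>t. v k)) \<le> (\<Sum>k\<le>t. f (v k)) / (real t + 1)"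
proof -
  have "f (\<Sum>k\<le>t. (1 / (real t + 1)) *\<^sub>R v k) \<le> (\<Sum>k\<le>t. (1 / (real t + 1)) * f (v k))"
    by (rule convex_on_sum[OF _ _ assms]) auto
  then show ?thesis
    by (simp add: scaleR_sum_right sum_divide_distrib[symmetric])
qed

lemma convex_nonneg_orthant: "convex {l :: real^'p. \<forall>i. 0 \<le> l $ i}"
  unfolding convex_def by auto

lemma stepsize_ratio_le:
  fixes a a' e e' :: real
  assumes "0 < a" "0 < e" "0 < e'" "e * (a' / a) \<le> e'"
  shows "a' / e' \<le> a / e"
  using assms by (simp add: field_simps)

locale spice_iteration =
  fixes X :: "(real^'n) set" and Y :: "(real^'m) set"
    and f :: "real^'n \<Rightarrow> real" and g :: "real^'m \<Rightarrow> real"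
    and Phi :: "real^'n \<Rightarrow> real^'p" and Psi :: "real^'m \<Rightarrow> real^'p"
    and DPhi :: "real^'n \<Rightarrow> real^'n^'p" and DPsi :: "real^'m \<Rightarrow> real^'m^'p"
    and \<rho> \<mu> :: real and \<eta> :: "nat \<Rightarrow> real" and t :: nat
    and x xb :: "nat \<Rightarrow> real^'n" and y yb :: "nat \<Rightarrow> real^'m"
    and l lb :: "nat \<Rightarrow> real^'p"
    and R :: "real^'n \<Rightarrow> real^'m \<Rightarrow> real" and r s :: "nat \<Rightarrow> real"
  assumes R_eq: "R = Rfun DPhi DPsi"
    and r_eq: "r = (\<lambda>k. sqrt (R (x k) (y k)) / \<eta> k)"
    and s_eq: "s = (\<lambda>k. \<mu> * R (xb k) (yb k) / (\<eta> k * sqrt (R (x k) (y k))))"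
    and convex_X: "convex X" and convex_Y: "convex Y"
    and f_cvx: "convex_on UNIV f" and g_cvx: "convex_on UNIV g"
    and Phi_cvx: "\<forall>i. convex_on UNIV (\<lambda>z. Phi z $ i)"
    and Psi_cvx: "\<forall>i. convex_on UNIV (\<lambda>z. Psi z $ i)"
    and Phi_deriv: "\<forall>z. (Phi has_derivative (\<lambda>h. DPhi z *v h)) (at z)"
    and Psi_deriv: "\<forall>z. (Psi has_derivative (\<lambda>h. DPsi z *v h)) (at z)"
    and rho_pos: "\<rho> > 0" and mu: "\<mu> > 1"
    and eta_pos: "\<forall>k. \<eta> k > 0"
    and R_pos: "\<forall>k. R (x k) (y k) > 0" "\<forall>k. R (xb k) (yb k) > 0"
    and xb_step: "\<forall>k. xb k \<in> X \<and> (\<forall>z\<in>X.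
        \<rho> * f (xb k) + (1 / \<eta> k) * (l k \<bullet> Phi (xb k)) + r k / 2 * (norm (xb k - x k))\<^sup>2
        \<le> \<rho> * f z + (1 / \<eta> k) * (l k \<bullet> Phi z) + r k / 2 * (norm (z - x k))\<^sup>2)"
    and yb_step: "\<forall>k. yb k \<in> Y \<and> (\<forall>z\<in>Y.
        \<rho> * g (yb k) + (1 / \<eta> k) * (l k \<bullet> Psi (yb k)) + r k / 2 * (norm (yb k - y k))\<^sup>2
        \<le> \<rho> * g z + (1 / \<eta> k) * (l k \<bullet> Psi z) + r k / 2 * (norm (z - y k))\<^sup>2)"
    and lb_step: "\<forall>k. lb k = (\<chi> i. max (l k $ i + (1 / (\<eta> k * s k)) * (Phi (xb k) $ i + Psi (yb k) $ i)) 0)"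
    and x_upd: "\<forall>k. x (Suc k) = xb k + (1 / (\<eta> k * r k)) *\<^sub>R (transpose (DPhi (xb k)) *v (l k - lb k))"
    and y_upd: "\<forall>k. y (Suc k) = yb k + (1 / (\<eta> k * r k)) *\<^sub>R (transpose (DPsi (yb k)) *v (l k - lb k))"
    and l_upd: "\<forall>k. l (Suc k) = lb k"
    and eta_cond: "\<forall>k\<in>{1..t}.
        \<eta> k \<ge> \<eta> (k - 1) * sqrt (R (x k) (y k) / R (x (k - 1)) (y (k - 1))) \<and>
        \<eta> k \<ge> \<eta> (k - 1) * (R (xb k) (yb k) * sqrt (R (x (k - 1)) (y (k - 1))))
                   / (R (xb (k - 1)) (yb (k - 1)) * sqrt (R (x k) (y k)))"
begin

lemma r_pos: "r k > 0"
  using R_pos eta_pos by (simp add: r_eq)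

lemma s_pos: "s k > 0"
  using R_pos eta_pos mu by (simp add: s_eq)

lemma r_antimono: "Suc k \<le> t \<Longrightarrow> r (Suc k) \<le> r k"
  using eta_cond[rule_format, of "Suc k"] R_pos eta_pos
  unfolding r_eq by (intro stepsize_ratio_le) (auto simp: real_sqrt_divide)

lemma s_antimono: "Suc k \<le> t \<Longrightarrow> s (Suc k) \<le> s k"
proof -
  assume "Suc k \<le> t"
  define a where "a j = \<mu> * R (xb j) (yb j) / sqrt (R (x j) (y j))" for j
  have "\<eta> k * (a (Suc k) / a k) = \<eta> k * (R (xb (Suc k)) (yb (Suc k)) * sqrt (R (x k) (y k)))
      / (R (xb k) (yb k) * sqrt (R (x (Suc k)) (y (Suc k))))"
    using R_pos mu by (simp add: a_def field_simps)
  also have "\<dots> \<le> \<eta> (Suc k)"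
    using eta_cond[rule_format, of "Suc k"] \<open>Suc k \<le> t\<close> by simp
  finally have "a (Suc k) / \<eta> (Suc k) \<le> a k / \<eta> k"
    using R_pos eta_pos mu by (intro stepsize_ratio_le) (auto simp: a_def)
  then show ?thesis by (simp add: s_eq a_def mult.commute)
qed

text \<open>The squared distance \<open>\<parallel>w - w\<^sup>k\<parallel>\<^sup>2\<close> in the metric \<open>H\<^sub>j = diag(r\<^sub>j I, r\<^sub>j I, s\<^sub>j I)\<close>.\<close>
definition H_dist :: "nat \<Rightarrow> real^'n \<Rightarrow> real^'m \<Rightarrow> real^'p \<Rightarrow> nat \<Rightarrow> real" where
  "H_dist j xs ys ls k = r j * ((norm (xs - x k))\<^sup>2 + (norm (ys - y k))\<^sup>2) + s j * (norm (ls - l k))\<^sup>2"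

text \<open>The pairing \<open>(v - w)\<^sup>T \<Gamma>(w)\<close> of a point \<open>v = (xv, yv, lv)\<close> with the operator at \<open>w = (xs, ys, ls)\<close>.\<close>
definition Gamma_pairing :: "real^'n \<Rightarrow> real^'m \<Rightarrow> real^'p \<Rightarrow> real^'n \<Rightarrow> real^'m \<Rightarrow> real^'p \<Rightarrow> real" where
  "Gamma_pairing xs ys ls xv yv lv =
     (xv - xs) \<bullet> (transpose (DPhi xs) *v ls) + (yv - ys) \<bullet> (transpose (DPsi ys) *v ls)
     + (lv - ls) \<bullet> (- Phi xs - Psi ys)"

definition eta_weighted_avg :: "(nat \<Rightarrow> 'a::real_vector) \<Rightarrow> 'a" where
  "eta_weighted_avg v = (1 / (\<Sum>k\<le>t. 1 / \<eta> k)) *\<^sub>R (\<Sum>k\<le>t. (1 / \<eta> k) *\<^sub>R v k)"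

lemma eta_sum_pos: "0 < (\<Sum>k\<le>t. 1 / \<eta> k)"
  using eta_pos by (intro sum_pos) auto

lemma eta_weighted_avg_mem:
  assumes "convex C" "\<forall>k\<le>t. v k \<in> C"
  shows "eta_weighted_avg v \<in> C"
  unfolding eta_weighted_avg_def
  using assms eta_pos eta_sum_pos by (intro convex_weighted_average_mem) (auto simp: less_imp_le)

lemma eta_weighted_avg_feasible:
  "eta_weighted_avg xb \<in> X \<and> eta_weighted_avg yb \<in> Y \<and> (\<forall>i. 0 \<le> eta_weighted_avg lb $ i)"
proof -
  have "eta_weighted_avg lb \<in> {l. \<forall>i. 0 \<le> l $ i}"
    using lb_step by (intro eta_weighted_avg_mem[OF convex_nonneg_orthant]) simp
  moreover have "eta_weighted_avg xb \<in> X" "eta_weighted_avg yb \<in> Y"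
    using xb_step yb_step by (auto intro: eta_weighted_avg_mem[OF convex_X] eta_weighted_avg_mem[OF convex_Y])
  ultimately show ?thesis by simp
qed

lemma H_dist_initial:
  "H_dist 0 xs ys ls 0 / (2 * \<rho> * (real t + 1))
    = 1 / (2 * \<eta> 0 * \<rho> * (real t + 1)) * (sqrt (R (x 0) (y 0)) * ((norm (xs - x 0))\<^sup>2 + (norm (ys - y 0))\<^sup>2)
        + \<mu> * R (xb 0) (yb 0) / sqrt (R (x 0) (y 0)) * (norm (ls - l 0))\<^sup>2)"
proof -
  have "\<eta> 0 > 0" "sqrt (R (x 0) (y 0)) > 0" "\<rho> * (real t + 1) > 0"
    using eta_pos R_pos rho_pos by auto
  then show ?thesis
    unfolding H_dist_def by (simp add: r_eq s_eq field_simps)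
qed

lemma descent:
  assumes "xs \<in> X" "ys \<in> Y" "\<forall>i. ls $ i \<ge> 0"
  shows "\<rho> * ((f (xb k) + g (yb k)) - (f xs + g ys)) + (1 / \<eta> k) * Gamma_pairing xs ys ls (xb k) (yb k) (lb k)
    \<le> 1/2 * (H_dist k xs ys ls k - H_dist k xs ys ls (Suc k))"
proof -
  have "(spec_norm (DPhi (xb k)))\<^sup>2 + (spec_norm (DPsi (yb k)))\<^sup>2 = R (xb k) (yb k)"
    by (simp add: R_eq Rfun_def)
  also have "\<dots> \<le> s k * (\<eta> k * \<eta> k * r k)"
    using R_pos eta_pos mu by (simp add: r_eq s_eq field_simps)
  finally show ?thesis
    using spice_iteration_descent[OF convex_X convex_Y f_cvx g_cvx Phi_cvx Psi_cvx Phi_deriv Psi_deriv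
        rho_pos eta_pos[rule_format] r_pos s_pos assms xb_step[rule_format] yb_step[rule_format]
        lb_step[rule_format] x_upd[rule_format] y_upd[rule_format]]
    unfolding H_dist_def Gamma_pairing_def by (simp add: l_upd)
qed

lemma H_dist_nonneg: "0 \<le> H_dist j xs ys ls k"
  using r_pos[of j] s_pos[of j] by (simp add: H_dist_def)

lemma H_dist_antimono: "k < t \<Longrightarrow> H_dist (Suc k) xs ys ls i \<le> H_dist k xs ys ls i"
  unfolding H_dist_def using r_antimono[of k] s_antimono[of k]
  by (intro add_mono mult_right_mono) auto

lemma Gamma_pairing_eta_weighted_sum:
  "(\<Sum>k\<le>t. (1 / \<eta> k) * Gamma_pairing xs ys ls (xb k) (yb k) (lb k))
    = (\<Sum>k\<le>t. 1 / \<eta> k)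
      * Gamma_pairing xs ys ls (eta_weighted_avg xb) (eta_weighted_avg yb) (eta_weighted_avg lb)"
proof -
  have ne: "(\<Sum>k\<le>t. 1 / \<eta> k) \<noteq> 0" using eta_sum_pos by simp
  show ?thesis
    unfolding Gamma_pairing_def eta_weighted_avg_def distrib_left sum.distrib
    by (simp only: sum_mult_inner_diff_weighted_average[OF ne])
qed

lemma sum_descent_le:
  assumes "xs \<in> X" "ys \<in> Y" "\<forall>i. ls $ i \<ge> 0"
  shows "(\<Sum>k\<le>t. \<rho> * ((f (xb k) + g (yb k)) - (f xs + g ys))
        + (1 / \<eta> k) * Gamma_pairing xs ys ls (xb k) (yb k) (lb k))
      \<le> 1/2 * H_dist 0 xs ys ls 0"
proof (rule sum_le_of_telescoping_nonincreasing[where V = "\<lambda>j k. 1/2 * H_dist j xs ys ls k"])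
  show "\<rho> * ((f (xb k) + g (yb k)) - (f xs + g ys)) + (1 / \<eta> k) * Gamma_pairing xs ys ls (xb k) (yb k) (lb k)
      \<le> 1/2 * H_dist k xs ys ls k - 1/2 * H_dist k xs ys ls (Suc k)" for k
    using descent[OF assms, of k] by (simp only: right_diff_distrib)
qed (use H_dist_antimono H_dist_nonneg in auto)

lemma ergodic_bound:
  assumes "xs \<in> X" "ys \<in> Y" "\<forall>i. ls $ i \<ge> 0"
  shows "(f ((1 / (real t + 1)) *\<^sub>R (\<Sum>k\<le>t. xb k)) + g ((1 / (real t + 1)) *\<^sub>R (\<Sum>k\<le>t. yb k)))
      - (f xs + g ys)
      + (\<Sum>k\<le>t. 1 / \<eta> k) / ((real t + 1) * \<rho>)
        * Gamma_pairing xs ys ls (eta_weighted_avg xb) (eta_weighted_avg yb) (eta_weighted_avg lb)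
    \<le> H_dist 0 xs ys ls 0 / (2 * \<rho> * (real t + 1))"
proof -
  define S where "S = (\<Sum>k\<le>t. 1 / \<eta> k)"
  define G where "G = Gamma_pairing xs ys ls (eta_weighted_avg xb) (eta_weighted_avg yb) (eta_weighted_avg lb)"
  define \<theta> where "\<theta> = (\<Sum>k\<le>t. f (xb k) + g (yb k))"
  define T where "T = real t + 1"
  have T: "T > 0" by (simp add: T_def)
  have "(\<Sum>k\<le>t. \<rho> * ((f (xb k) + g (yb k)) - (f xs + g ys))
        + (1 / \<eta> k) * Gamma_pairing xs ys ls (xb k) (yb k) (lb k))
      \<le> 1/2 * H_dist 0 xs ys ls 0"
    by (rule sum_descent_le[OF assms])
  moreover have "(\<Sum>k\<le>t. \<rho> * ((f (xb k) + g (yb k)) - (f xs + g ys))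
        + (1 / \<eta> k) * Gamma_pairing xs ys ls (xb k) (yb k) (lb k))
      = \<rho> * \<theta> - \<rho> * T * (f xs + g ys) + S * G"
    unfolding sum.distrib Gamma_pairing_eta_weighted_sum S_def[symmetric] G_def[symmetric]
    by (simp add: sum_subtractf right_diff_distrib \<theta>_def T_def flip: sum_distrib_left)
  ultimately have telescoped: "\<rho> * \<theta> - \<rho> * T * (f xs + g ys) + S * G \<le> 1/2 * H_dist 0 xs ys ls 0"
    by simp
  define avg where "avg = f ((1 / T) *\<^sub>R (\<Sum>k\<le>t. xb k)) + g ((1 / T) *\<^sub>R (\<Sum>k\<le>t. yb k))"
  have "T * avg \<le> \<theta>"
    using convex_on_uniform_average_le[OF f_cvx, of t xb] convex_on_uniform_average_le[OF g_cvx, of t yb] T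
    by (simp add: avg_def \<theta>_def T_def sum.distrib field_simps)
  then have jensen: "\<rho> * (T * avg) \<le> \<rho> * \<theta>"
    using rho_pos by simp
  have "T * \<rho> * (avg - (f xs + g ys) + S / (T * \<rho>) * G) = \<rho> * (T * avg) - \<rho> * T * (f xs + g ys) + S * G"
    using T rho_pos by (simp add: field_simps)
  with jensen telescoped have "T * \<rho> * (avg - (f xs + g ys) + S / (T * \<rho>) * G) \<le> H_dist 0 xs ys ls 0 / 2"
    by linarith
  with rho_pos T show ?thesis
    unfolding S_def[symmetric] G_def[symmetric] T_def[symmetric] avg_def[symmetric]
    by (simp add: pos_le_divide_eq mult_ac)
qed

end

theorem theorem4p3:
  fixes X :: "(real^'n) set" and Y :: "(real^'m) set"
    and f :: "real^'n \<Rightarrow> real" and g :: "real^'m \<Rightarrow> real"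
    and Phi :: "real^'n \<Rightarrow> real^'p" and Psi :: "real^'m \<Rightarrow> real^'p"
    and DPhi :: "real^'n \<Rightarrow> real^'n^'p" and DPsi :: "real^'m \<Rightarrow> real^'m^'p"
    and \<rho> \<mu> :: real and \<eta> :: "nat \<Rightarrow> real" and t :: nat
    and x xb :: "nat \<Rightarrow> real^'n" and y yb :: "nat \<Rightarrow> real^'m"
    and l lb :: "nat \<Rightarrow> real^'p"
  defines "R \<equiv> Rfun DPhi DPsi"
  defines "r \<equiv> (\<lambda>k. sqrt (R (x k) (y k)) / \<eta> k)"
  defines "s \<equiv> (\<lambda>k. \<mu> * R (xb k) (yb k) / (\<eta> k * sqrt (R (x k) (y k))))"
  assumes X: "closed X" "convex X" "X \<noteq> {}"
    and Y: "closed Y" "convex Y" "Y \<noteq> {}"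
    and f_cvx: "convex_on UNIV f" and g_cvx: "convex_on UNIV g"
    and Phi_cvx: "\<forall>i. convex_on UNIV (\<lambda>z. Phi z $ i)"
    and Psi_cvx: "\<forall>i. convex_on UNIV (\<lambda>z. Psi z $ i)"
    and Phi_deriv: "\<forall>z. (Phi has_derivative (\<lambda>h. DPhi z *v h)) (at z)"
    and Psi_deriv: "\<forall>z. (Psi has_derivative (\<lambda>h. DPsi z *v h)) (at z)"
    and DPhi_cont: "continuous_on UNIV DPhi" and DPsi_cont: "continuous_on UNIV DPsi"
    and rho_pos: "\<rho> > 0" and mu: "\<mu> > 1"
    and eta_pos: "\<forall>k. \<eta> k > 0"
    and t_pos: "t > 0"
    and w0: "x 0 \<in> X" "y 0 \<in> Y" "\<forall>i. l 0 $ i \<ge> 0"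
    and R_pos: "\<forall>k. R (x k) (y k) > 0" "\<forall>k. R (xb k) (yb k) > 0"
    and xb_step: "\<forall>k. xb k \<in> X \<and> (\<forall>z\<in>X.
        \<rho> * f (xb k) + (1 / \<eta> k) * (l k \<bullet> Phi (xb k)) + r k / 2 * (norm (xb k - x k))\<^sup>2
        \<le> \<rho> * f z + (1 / \<eta> k) * (l k \<bullet> Phi z) + r k / 2 * (norm (z - x k))\<^sup>2)"
    and yb_step: "\<forall>k. yb k \<in> Y \<and> (\<forall>z\<in>Y.
        \<rho> * g (yb k) + (1 / \<eta> k) * (l k \<bullet> Psi (yb k)) + r k / 2 * (norm (yb k - y k))\<^sup>2
        \<le> \<rho> * g z + (1 / \<eta> k) * (l k \<bullet> Psi z) + r k / 2 * (norm (z - y k))\<^sup>2)"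
    and lb_step: "\<forall>k. lb k = (\<chi> i. max (l k $ i + (1 / (\<eta> k * s k)) * (Phi (xb k) $ i + Psi (yb k) $ i)) 0)"
    and x_upd: "\<forall>k. x (Suc k) = xb k + (1 / (\<eta> k * r k)) *\<^sub>R (transpose (DPhi (xb k)) *v (l k - lb k))"
    and y_upd: "\<forall>k. y (Suc k) = yb k + (1 / (\<eta> k * r k)) *\<^sub>R (transpose (DPsi (yb k)) *v (l k - lb k))"
    and l_upd: "\<forall>k. l (Suc k) = lb k"
    and eta_cond: "\<forall>k\<in>{1..t}.
        \<eta> k \<ge> \<eta> (k - 1) * sqrt (R (x k) (y k) / R (x (k - 1)) (y (k - 1))) \<and>
        \<eta> k \<ge> \<eta> (k - 1) * (R (xb k) (yb k) * sqrt (R (x (k - 1)) (y (k - 1))))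
                   / (R (xb (k - 1)) (yb (k - 1)) * sqrt (R (x k) (y k)))"
  shows "let S = (\<Sum>k\<le>t. 1 / \<eta> k);
             eta_avg = (real t + 1) / S;
             xu = (1 / (real t + 1)) *\<^sub>R (\<Sum>k\<le>t. xb k);
             yu = (1 / (real t + 1)) *\<^sub>R (\<Sum>k\<le>t. yb k);
             xw = (1 / S) *\<^sub>R (\<Sum>k\<le>t. (1 / \<eta> k) *\<^sub>R xb k);
             yw = (1 / S) *\<^sub>R (\<Sum>k\<le>t. (1 / \<eta> k) *\<^sub>R yb k);
             lw = (1 / S) *\<^sub>R (\<Sum>k\<le>t. (1 / \<eta> k) *\<^sub>R lb k)
         in (xw \<in> X \<and> yw \<in> Y \<and> (\<forall>i. lw $ i \<ge> 0)) \<and>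
            (\<forall>xs ys ls. xs \<in> X \<longrightarrow> ys \<in> Y \<longrightarrow> (\<forall>i. ls $ i \<ge> 0) \<longrightarrow>
              (let N = sqrt (R (x 0) (y 0)) * ((norm (xs - x 0))\<^sup>2 + (norm (ys - y 0))\<^sup>2)
                       + \<mu> * R (xb 0) (yb 0) / sqrt (R (x 0) (y 0)) * (norm (ls - l 0))\<^sup>2;
                   RHS = 1 / (2 * \<eta> 0 * \<rho> * (real t + 1)) * N
               in (f xu + g yu) - (f xs + g ys)
                  + (1 / (eta_avg * \<rho>)) *
                    ((xw - xs) \<bullet> (transpose (DPhi xs) *v ls)
                     + (yw - ys) \<bullet> (transpose (DPsi ys) *v ls)
                     + (lw - ls) \<bullet> (- Phi xs - Psi ys))
                  \<le> RHS
                 \<and> (\<forall>\<alpha>>0. \<rho> = (real t + 1) powr \<alpha> \<longrightarrow>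
                        RHS = (N / (2 * \<eta> 0)) / (real t + 1) powr (1 + \<alpha>))
                 \<and> (\<forall>\<beta>>0. \<rho> = exp (\<beta> * real t) \<longrightarrow>
                        RHS = (N / (2 * \<eta> 0)) / (exp (\<beta> * real t) * (real t + 1)))
                 \<and> (\<rho> = (real t + 1) ^ t \<longrightarrow>
                        RHS = (N / (2 * \<eta> 0)) / (real t + 1) ^ (t + 1))))"
proof -
  \<comment> \<open>Closedness and nonemptiness of \<open>X, Y\<close>, continuity of the Jacobians, \<open>t > 0\<close> and
    \<open>w\<^sup>0 \<in> \<Omega>\<close> only guarantee that the iteration is well defined, which the hypotheses
    on \<open>xb, yb\<close> already assert.\<close>
  interpret spice_iteration X Y f g Phi Psi DPhi DPsi \<rho> \<mu> \<eta> t x xb y yb l lb R r s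
    using X(2) Y(2) f_cvx g_cvx Phi_cvx Psi_cvx Phi_deriv Psi_deriv rho_pos mu eta_pos R_pos
      xb_step yb_step lb_step x_upd y_upd l_upd eta_cond
    by unfold_locales (simp_all add: R_def r_def s_def)
  have avg_coeff: "1 / ((real t + 1) / (\<Sum>k\<le>t. 1 / \<eta> k) * \<rho>) = (\<Sum>k\<le>t. 1 / \<eta> k) / ((real t + 1) * \<rho>)"
    by simp
  have rates: "(\<forall>\<alpha>>0. \<rho> = (real t + 1) powr \<alpha> \<longrightarrow>
          1 / (2 * \<eta> 0 * \<rho> * (real t + 1)) * N = (N / (2 * \<eta> 0)) / (real t + 1) powr (1 + \<alpha>))
      \<and> (\<forall>\<beta>>0. \<rho> = exp (\<beta> * real t) \<longrightarrow>
          1 / (2 * \<eta> 0 * \<rho> * (real t + 1)) * N = (N / (2 * \<eta> 0)) / (exp (\<beta> * real t) * (real t + 1)))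
      \<and> (\<rho> = (real t + 1) ^ t \<longrightarrow>
          1 / (2 * \<eta> 0 * \<rho> * (real t + 1)) * N = (N / (2 * \<eta> 0)) / (real t + 1) ^ (t + 1))" for N
    by (auto simp: powr_add)
  show ?thesis
    unfolding Let_def avg_coeff
    using eta_weighted_avg_feasible ergodic_bound[unfolded H_dist_initial Gamma_pairing_def]
      rates unfolding eta_weighted_avg_def
    by blast
qed

end
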